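(* Let $(M,d)$ be a complete pointed metric space and let $\mu,\nu$ be positive Radon measures on $\beta\widetilde{M}$ such that $\mu\preccurlyeq\nu$ and $\nu$ is concentrated on $\mathcal{R}$. Then $p_i(\operatorname{supp}\mu)\subset p_i(\operatorname{supp}\nu)$ for $i=1,2$.
   Context: $\widetilde{M}=\{(x,y)\in M\times M:x\ne y\}$, $\beta\widetilde{M}$ its Stone–Čech compactification; Radon measures identified with $C(\beta\widetilde{M})^*$; $\operatorname{supp}$ denotes the closed support of a measure. $M^u$ is the uniform (Samuel) compactification of $M$; $p_1,p_2:\beta\widetilde{M}\to M^u$ continuously extend the coordinate projections, $p=(p_1,p_2)$. $\mathcal{R}(M)=\{\xi\in M^u:\overline{d_0}(\xi)<\infty\}$, where $\overline{d_0}:M^u\to[0,\infty]$ continuously extends $x\mapsto d(x,0)$ ($0$ the base point), and $\mathcal{R}=p^{-1}(\mathcal{R}(M)\times\mathcal{R}(M))$. $G$ is the set of $g\in C(\beta\widetilde{M})$ with $d(x,y)g(x,y)\le d(x,u)g(x,u)+d(u,y)g(u,y)$ for all distinct $x,u,y\in M$; $\mu\preccurlyeq\nu$ iff $\int g\,d\mu\le\int g\,d\nu$ for all $g\in G$. Throughout, $M$ has at least three distinct points. *)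

theory Defs
  imports "HOL-Analysis.Analysis"
begin

definition borel_of :: "'a topology \<Rightarrow> 'a measure" where
  "borel_of X = sigma (topspace X) {U. openin X U}"

text \<open>Positive Radon measure on a (compact Hausdorff) space K: a finite Borel measure,
  inner regular by compact sets (the positive elements of C(K)^* by Riesz).\<close>
definition radon_measure :: "'a topology \<Rightarrow> 'a measure \<Rightarrow> bool" where
  "radon_measure K \<mu> \<longleftrightarrow>
     sets \<mu> = sets (borel_of K) \<and> space \<mu> = topspace K \<and> finite_measure \<mu> \<and>
     (\<forall>B \<in> sets \<mu>. emeasure \<mu> B = (SUP C \<in> {C. compactin K C \<and> C \<subseteq> B}. emeasure \<mu> C))"

definition support_of :: "'a topology \<Rightarrow> 'a measure \<Rightarrow> 'a set" where
  "support_of K \<mu> = {x \<in> topspace K. \<forall>U. openin K U \<and> x \<in> U \<longrightarrow> emeasure \<mu> U > 0}"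

definition embed_by :: "('b \<Rightarrow> real) set \<Rightarrow> 'b \<Rightarrow> (('b \<Rightarrow> real) \<Rightarrow> real)" where
  "embed_by F x = restrict (\<lambda>f. f x) F"

definition compactification_by ::
  "'b topology \<Rightarrow> ('b \<Rightarrow> real) set \<Rightarrow> (('b \<Rightarrow> real) \<Rightarrow> real) topology" where
  "compactification_by X F =
     subtopology (product_topology (\<lambda>_. euclideanreal) F)
       ((product_topology (\<lambda>_. euclideanreal) F) closure_of (embed_by F ` topspace X))"

definition bcont :: "'b topology \<Rightarrow> ('b \<Rightarrow> real) set" where
  "bcont X = {f. continuous_map X euclideanreal f \<and> bounded (f ` topspace X)}"

definition stone_cech :: "'b topology \<Rightarrow> (('b \<Rightarrow> real) \<Rightarrow> real) topology" where
  "stone_cech X = compactification_by X (bcont X)"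

definition buc :: "'a set \<Rightarrow> ('a \<Rightarrow> 'a \<Rightarrow> real) \<Rightarrow> ('a \<Rightarrow> real) set" where
  "buc M d = {f. uniformly_continuous_map (metric (M,d)) euclidean_metric f \<and> bounded (f ` M)}"

definition samuel :: "'a set \<Rightarrow> ('a \<Rightarrow> 'a \<Rightarrow> real) \<Rightarrow> (('a \<Rightarrow> real) \<Rightarrow> real) topology" where
  "samuel M d = compactification_by (Metric_space.mtopology M d) (buc M d)"

definition cont_ext :: "'k topology \<Rightarrow> 'c topology \<Rightarrow> ('s \<Rightarrow> 'k) \<Rightarrow> 's set \<Rightarrow> ('s \<Rightarrow> 'c) \<Rightarrow> 'k \<Rightarrow> 'c" where
  "cont_ext K Y j S f = (SOME g. continuous_map K Y g \<and> (\<forall>s\<in>S. g (j s) = f s))"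

definition offdiag :: "'a set \<Rightarrow> ('a \<times> 'a) set" where
  "offdiag M = {(x,y). x \<in> M \<and> y \<in> M \<and> x \<noteq> y}"

definition offdiag_top :: "'a set \<Rightarrow> ('a \<Rightarrow> 'a \<Rightarrow> real) \<Rightarrow> ('a \<times> 'a) topology" where
  "offdiag_top M d = subtopology (prod_topology (Metric_space.mtopology M d) (Metric_space.mtopology M d)) (offdiag M)"

definition betaMt :: "'a set \<Rightarrow> ('a \<Rightarrow> 'a \<Rightarrow> real) \<Rightarrow> ((('a \<times> 'a) \<Rightarrow> real) \<Rightarrow> real) topology" where
  "betaMt M d = stone_cech (offdiag_top M d)"

definition jbeta :: "'a set \<Rightarrow> ('a \<Rightarrow> 'a \<Rightarrow> real) \<Rightarrow> 'a \<times> 'a \<Rightarrow> (('a \<times> 'a) \<Rightarrow> real) \<Rightarrow> real" where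
  "jbeta M d = embed_by (bcont (offdiag_top M d))"

definition ju :: "'a set \<Rightarrow> ('a \<Rightarrow> 'a \<Rightarrow> real) \<Rightarrow> 'a \<Rightarrow> ('a \<Rightarrow> real) \<Rightarrow> real" where
  "ju M d = embed_by (buc M d)"

definition proj1 :: "'a set \<Rightarrow> ('a \<Rightarrow> 'a \<Rightarrow> real) \<Rightarrow> ((('a \<times> 'a) \<Rightarrow> real) \<Rightarrow> real) \<Rightarrow> ('a \<Rightarrow> real) \<Rightarrow> real" where
  "proj1 M d = cont_ext (betaMt M d) (samuel M d) (jbeta M d) (offdiag M) (\<lambda>(x,y). ju M d x)"

definition proj2 :: "'a set \<Rightarrow> ('a \<Rightarrow> 'a \<Rightarrow> real) \<Rightarrow> ((('a \<times> 'a) \<Rightarrow> real) \<Rightarrow> real) \<Rightarrow> ('a \<Rightarrow> real) \<Rightarrow> real" where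
  "proj2 M d = cont_ext (betaMt M d) (samuel M d) (jbeta M d) (offdiag M) (\<lambda>(x,y). ju M d y)"

definition dbar0 :: "'a set \<Rightarrow> ('a \<Rightarrow> 'a \<Rightarrow> real) \<Rightarrow> 'a \<Rightarrow> (('a \<Rightarrow> real) \<Rightarrow> real) \<Rightarrow> ereal" where
  "dbar0 M d z = cont_ext (samuel M d) (euclidean :: ereal topology) (ju M d) M (\<lambda>x. ereal (d x z))"

definition RM :: "'a set \<Rightarrow> ('a \<Rightarrow> 'a \<Rightarrow> real) \<Rightarrow> 'a \<Rightarrow> (('a \<Rightarrow> real) \<Rightarrow> real) set" where
  "RM M d z = {\<xi> \<in> topspace (samuel M d). dbar0 M d z \<xi> < \<infinity>}"

definition Rset :: "'a set \<Rightarrow> ('a \<Rightarrow> 'a \<Rightarrow> real) \<Rightarrow> 'a \<Rightarrow> ((('a \<times> 'a) \<Rightarrow> real) \<Rightarrow> real) set" where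
  "Rset M d z = {\<phi> \<in> topspace (betaMt M d). proj1 M d \<phi> \<in> RM M d z \<and> proj2 M d \<phi> \<in> RM M d z}"

definition Gset :: "'a set \<Rightarrow> ('a \<Rightarrow> 'a \<Rightarrow> real) \<Rightarrow> (((('a \<times> 'a) \<Rightarrow> real) \<Rightarrow> real) \<Rightarrow> real) set" where
  "Gset M d = {g. continuous_map (betaMt M d) euclideanreal g \<and>
     (\<forall>x\<in>M. \<forall>u\<in>M. \<forall>y\<in>M. x \<noteq> u \<and> u \<noteq> y \<and> x \<noteq> y \<longrightarrow>
        d x y * g (jbeta M d (x,y)) \<le> d x u * g (jbeta M d (x,u)) + d u y * g (jbeta M d (u,y)))}"

definition mpreceq :: "'a set \<Rightarrow> ('a \<Rightarrow> 'a \<Rightarrow> real) \<Rightarrow> ((('a \<times> 'a) \<Rightarrow> real) \<Rightarrow> real) measure \<Rightarrow> ((('a \<times> 'a) \<Rightarrow> real) \<Rightarrow> real) measure \<Rightarrow> bool" where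
  "mpreceq M d \<mu> \<nu> \<longleftrightarrow> (\<forall>g \<in> Gset M d. integral\<^sup>L \<mu> g \<le> integral\<^sup>L \<nu> g)"

end

theory Submission
  imports Defs
begin

text \<open>Both inclusions are proved in the same way, for \<open>p = p\<^sub>i\<close>.
  First, \<open>\<mu>\<close> is concentrated on \<open>\<R>\<close> as well: the functions
  \<open>g\<^sub>n(x,y) = min 1 (((d(x,0) - n)\<^sup>+ + (d(y,0) - n)\<^sup>+) / d(x,y))\<close> lie in \<open>G\<close>,
  are at least \<open>1/4\<close> off \<open>\<R>\<close> and vanish eventually on \<open>\<R>\<close>, so
  \<open>\<mu>(\<beta>M\<^sup>~ - \<R>)/4 \<le> \<integral>g\<^sub>n d\<mu> \<le> \<integral>g\<^sub>n d\<nu> \<longrightarrow> 0\<close> by dominated convergence.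
  Next, suppose \<open>\<xi> = p(\<phi>)\<close> with \<open>\<phi> \<in> supp \<mu>\<close> lies outside the compact set \<open>p(supp \<nu>)\<close>.
  Bounded uniformly continuous functions separate \<open>\<xi>\<close> from \<open>p(supp \<nu>)\<close> in \<open>M\<^sup>u\<close>, giving
  \<open>a \<ge> 0\<close> on \<open>M\<close> whose extension is \<open>1\<close> at \<open>\<xi>\<close> and \<open>0\<close> near \<open>p(supp \<nu>)\<close>; let \<open>b\<close> be
  its largest \<open>1\<close>-Lipschitz minorant. Then \<open>g(x,y) = min 1 (b(x)/d(x,y))\<close> (resp. \<open>b(y)\<close>)
  lies in \<open>G\<close>, vanishes on \<open>supp \<nu>\<close>, and is positive on \<open>\<R> \<inter> {a \<circ> p > 1/2}\<close>, which has
  positive \<open>\<mu>\<close>-measure; this contradicts \<open>\<integral>g d\<mu> \<le> \<integral>g d\<nu> = 0\<close>.\<close>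

section \<open>Radon measures and their supports\<close>

lemma radon_measure_space: "radon_measure K \<mu> \<Longrightarrow> space \<mu> = topspace K"
  by (simp add: radon_measure_def)

lemma radon_measure_openin_sets:
  assumes "radon_measure K \<mu>" "openin K U"
  shows "U \<in> sets \<mu>"
proof -
  have "{U. openin K U} \<subseteq> Pow (topspace K)" using openin_subset by auto
  moreover have "U \<in> sigma_sets (topspace K) {U. openin K U}"
    using assms(2) by (auto intro: sigma_sets.Basic)
  ultimately show ?thesis
    using assms(1) sets_measure_of by (simp add: radon_measure_def borel_of_def)
qed

lemma radon_measure_closedin_sets:
  assumes "radon_measure K \<mu>" "closedin K C"
  shows "C \<in> sets \<mu>"
proof -
  have "topspace K - C \<in> sets \<mu>"
    using radon_measure_openin_sets[OF assms(1)] assms(2) by (simp add: openin_diff)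
  then have "space \<mu> - (topspace K - C) \<in> sets \<mu>" by auto
  moreover have "space \<mu> - (topspace K - C) = C"
    using radon_measure_space[OF assms(1)] closedin_subset[OF assms(2)] by auto
  ultimately show ?thesis by simp
qed

lemma radon_measure_borel_measurable:
  assumes "radon_measure K \<mu>" "continuous_map K euclideanreal g"
  shows "g \<in> borel_measurable \<mu>"
proof (rule borel_measurableI)
  fix S :: "real set" assume "open S"
  then have "openin K {x \<in> topspace K. g x \<in> S}"
    using assms(2) by (intro openin_continuous_map_preimage) auto
  moreover have "g -` S \<inter> space \<mu> = {x \<in> topspace K. g x \<in> S}"
    using radon_measure_space[OF assms(1)] by auto
  ultimately show "g -` S \<inter> space \<mu> \<in> sets \<mu>"
    using radon_measure_openin_sets[OF assms(1)] by simp
qed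

lemma radon_measure_integrable_bounded:
  assumes "radon_measure K \<mu>" "continuous_map K euclideanreal g"
    and "\<And>x. x \<in> topspace K \<Longrightarrow> \<bar>g x\<bar> \<le> B"
  shows "integrable \<mu> g"
proof -
  interpret finite_measure \<mu> using assms(1) by (simp add: radon_measure_def)
  show ?thesis
    using assms radon_measure_space[OF assms(1)] radon_measure_borel_measurable[OF assms(1,2)]
    by (intro integrable_const_bound[where B=B]) auto
qed

lemma radon_measure_inner_regular:
  assumes "radon_measure K \<mu>" "B \<in> sets \<mu>"
  shows "emeasure \<mu> B = (SUP C \<in> {C. compactin K C \<and> C \<subseteq> B}. emeasure \<mu> C)"
  using assms unfolding radon_measure_def by blast

lemma openin_complement_support_of: "openin K (topspace K - support_of K \<mu>)"
proof (subst openin_subopen, intro ballI)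
  fix x assume "x \<in> topspace K - support_of K \<mu>"
  then obtain V where V: "openin K V" "x \<in> V" "\<not> emeasure \<mu> V > 0"
    by (auto simp: support_of_def)
  then have "V \<subseteq> topspace K - support_of K \<mu>"
    using openin_subset[OF V(1)] by (auto simp: support_of_def)
  then show "\<exists>T. openin K T \<and> x \<in> T \<and> T \<subseteq> topspace K - support_of K \<mu>" using V by blast
qed

lemma closedin_support_of: "closedin K (support_of K \<mu>)"
  using openin_complement_support_of[of K \<mu>] by (simp add: closedin_def support_of_def)

text \<open>Inner regularity reduces the claim to compact sets, and a compact set outside the
  support is covered by finitely many open null sets.\<close>
lemma radon_measure_complement_support_null:
  assumes "radon_measure K \<mu>"
  shows "emeasure \<mu> (topspace K - support_of K \<mu>) = 0"
proof -
  let ?U = "topspace K - support_of K \<mu>"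
  have null_compact: "emeasure \<mu> C = 0" if C: "compactin K C" "C \<subseteq> ?U" for C
  proof -
    have "C \<subseteq> \<Union>{V. openin K V \<and> emeasure \<mu> V = 0}"
    proof
      fix x assume "x \<in> C"
      then have "x \<in> topspace K - support_of K \<mu>" using C(2) by blast
      then obtain V where "openin K V" "x \<in> V" "\<not> emeasure \<mu> V > 0"
        by (auto simp: support_of_def)
      then show "x \<in> \<Union>{V. openin K V \<and> emeasure \<mu> V = 0}" by (auto simp: not_gr_zero)
    qed
    then obtain F where F: "finite F" "F \<subseteq> {V. openin K V \<and> emeasure \<mu> V = 0}" "C \<subseteq> \<Union>F"
      using C(1) unfolding compactin_def by (metis (no_types, lifting) mem_Collect_eq)
    have Fs: "F \<subseteq> sets \<mu>" using F(2) radon_measure_openin_sets[OF assms] by auto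
    have "emeasure \<mu> (\<Union>F) \<le> (\<Sum>V\<in>F. emeasure \<mu> V)"
      using emeasure_subadditive_finite[OF F(1), of "\<lambda>V. V"] Fs by auto
    also have "\<dots> = 0" using F(2) by (auto intro: sum.neutral)
    finally have "emeasure \<mu> (\<Union>F) = 0" by simp
    moreover have "\<Union>F \<in> sets \<mu>" using Fs F(1) by auto
    ultimately show ?thesis
      using emeasure_mono[OF F(3), of \<mu>] by simp
  qed
  have "?U \<in> sets \<mu>"
    by (rule radon_measure_openin_sets[OF assms openin_complement_support_of])
  then have "emeasure \<mu> ?U = (SUP C \<in> {C. compactin K C \<and> C \<subseteq> ?U}. emeasure \<mu> C)"
    by (rule radon_measure_inner_regular[OF assms])
  also have "\<dots> = 0"
    using null_compact by (intro antisym SUP_least) auto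
  finally show ?thesis .
qed

lemma radon_measure_AE_support:
  assumes "radon_measure K \<mu>"
  shows "AE x in \<mu>. x \<in> support_of K \<mu>"
proof (rule AE_I)
  show "{x \<in> space \<mu>. x \<notin> support_of K \<mu>} \<subseteq> topspace K - support_of K \<mu>"
    using radon_measure_space[OF assms] by auto
  show "emeasure \<mu> (topspace K - support_of K \<mu>) = 0"
    by (rule radon_measure_complement_support_null[OF assms])
  show "topspace K - support_of K \<mu> \<in> sets \<mu>"
    by (rule radon_measure_openin_sets[OF assms openin_complement_support_of])
qed

lemma radon_measure_integral_eq_0:
  fixes g :: "'a \<Rightarrow> real"
  assumes "radon_measure K \<mu>" "\<And>x. x \<in> support_of K \<mu> \<Longrightarrow> g x = 0"
  shows "integral\<^sup>L \<mu> g = 0"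
  using radon_measure_AE_support[OF assms(1)]
  by (intro integral_eq_zero_AE) (auto elim: AE_mp intro: AE_I2 assms(2))

lemma integral_pos_if_pos_on_set:
  fixes g :: "'a \<Rightarrow> real"
  assumes "integrable \<mu> g" "AE x in \<mu>. 0 \<le> g x"
    and "S \<in> sets \<mu>" "emeasure \<mu> S > 0" "\<And>x. x \<in> S \<Longrightarrow> 0 < g x"
  shows "0 < integral\<^sup>L \<mu> g"
proof -
  have "\<not> (AE x in \<mu>. g x = 0)"
  proof
    assume "AE x in \<mu>. g x = 0"
    then have "AE x in \<mu>. x \<notin> S"
      by (rule AE_mp) (auto intro!: AE_I2 dest: assms(5))
    moreover have "{x \<in> space \<mu>. \<not> x \<notin> S} = S" using sets.sets_into_space[OF assms(3)] by auto
    ultimately show False using assms(3,4) AE_iff_measurable[of S \<mu> "\<lambda>x. x \<notin> S"] by simp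
  qed
  then show ?thesis
    using integral_nonneg_eq_0_iff_AE[OF assms(1,2)] integral_nonneg_AE[OF assms(2)] by linarith
qed

lemma radon_measure_null_by_test_functions:
  fixes g :: "nat \<Rightarrow> 'a \<Rightarrow> real"
  assumes \<mu>: "radon_measure K \<mu>" and \<nu>: "radon_measure K \<nu>" and N: "closedin K N" and "0 < c"
    and g_cont: "\<And>n. continuous_map K euclideanreal (g n)"
    and g_bounds: "\<And>n x. x \<in> topspace K \<Longrightarrow> 0 \<le> g n x \<and> g n x \<le> 1"
    and g_large: "\<And>n x. x \<in> N \<Longrightarrow> c \<le> g n x"
    and g_le: "\<And>n. integral\<^sup>L \<mu> (g n) \<le> integral\<^sup>L \<nu> (g n)"
    and g_lim: "AE x in \<nu>. (\<lambda>n. g n x) \<longlonglongrightarrow> 0"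
  shows "emeasure \<mu> N = 0"
proof -
  interpret \<mu>: finite_measure \<mu> using \<mu> by (simp add: radon_measure_def)
  have N_sets: "N \<in> sets \<mu>" by (rule radon_measure_closedin_sets[OF \<mu> N])
  have "c * measure \<mu> N \<le> integral\<^sup>L \<nu> (g n)" for n
  proof -
    have "c * measure \<mu> N = integral\<^sup>L \<mu> (\<lambda>x. c * indicator N x)"
      using N_sets by simp
    also have "\<dots> \<le> integral\<^sup>L \<mu> (g n)"
    proof (rule integral_mono)
      show "integrable \<mu> (\<lambda>x. c * indicator N x)"
        using N_sets by (intro integrable_mult_right integrable_real_indicator) (auto simp: less_top[symmetric])
      show "integrable \<mu> (g n)"
        using g_bounds by (intro radon_measure_integrable_bounded[OF \<mu> g_cont, where B=1]) auto
      fix x assume "x \<in> space \<mu>"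
      then show "c * indicator N x \<le> g n x"
        using g_large g_bounds radon_measure_space[OF \<mu>] by (auto simp: indicator_def)
    qed
    finally show ?thesis using g_le[of n] by linarith
  qed
  moreover have "(\<lambda>n. integral\<^sup>L \<nu> (g n)) \<longlonglongrightarrow> integral\<^sup>L \<nu> (\<lambda>_. 0)"
  proof (rule integral_dominated_convergence[where w="\<lambda>_. 1"])
    interpret \<nu>: finite_measure \<nu> using \<nu> by (simp add: radon_measure_def)
    show "integrable \<nu> (\<lambda>_. 1::real)" by simp
    show "g n \<in> borel_measurable \<nu>" for n
      by (rule radon_measure_borel_measurable[OF \<nu> g_cont])
    show "AE x in \<nu>. norm (g n x) \<le> 1" for n
      using g_bounds radon_measure_space[OF \<nu>] by (intro AE_I2) auto
  qed (use g_lim in auto)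
  ultimately have "c * measure \<mu> N \<le> 0"
    by (intro LIMSEQ_le_const) auto
  then have "measure \<mu> N = 0"
    using \<open>0 < c\<close> measure_nonneg[of \<mu> N] by (simp add: mult_le_0_iff)
  then show ?thesis by (simp add: \<mu>.emeasure_eq_measure)
qed

section \<open>Compactifications defined by families of bounded functions\<close>

lemma continuous_map_closedin_dense:
  assumes g: "continuous_map X Y g" and dense: "X closure_of D = topspace X"
    and U: "openin X U" "x \<in> U" and C: "closedin Y C"
    and DC: "\<And>y. y \<in> D \<Longrightarrow> y \<in> U \<Longrightarrow> g y \<in> C"
  shows "g x \<in> C"
proof (rule ccontr)
  assume "g x \<notin> C"
  define V where "V = U \<inter> {y \<in> topspace X. g y \<in> topspace Y - C}"
  have "openin X V"
    unfolding V_def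
    by (intro openin_Int U(1) openin_continuous_map_preimage[OF g] openin_diff openin_topspace C)
  have x: "x \<in> topspace X" using U openin_subset by blast
  then have "g x \<in> topspace Y"
    using continuous_map_image_subset_topspace[OF g] by blast
  then have "x \<in> V" using U(2) x \<open>g x \<notin> C\<close> by (simp add: V_def)
  moreover have "x \<in> X closure_of D" using dense x by simp
  ultimately obtain y where "y \<in> D" "y \<in> V"
    using \<open>openin X V\<close> in_closure_of by metis
  then show False using DC by (auto simp: V_def)
qed

lemma cont_ext_extends:
  assumes "continuous_map K Y g" "\<And>s. s \<in> S \<Longrightarrow> g (j s) = f s"
  shows "continuous_map K Y (cont_ext K Y j S f)" "\<And>s. s \<in> S \<Longrightarrow> cont_ext K Y j S f (j s) = f s"
proof -
  have "\<exists>g. continuous_map K Y g \<and> (\<forall>s\<in>S. g (j s) = f s)" using assms by blast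
  from someI_ex[OF this]
  show "continuous_map K Y (cont_ext K Y j S f)" "\<And>s. s \<in> S \<Longrightarrow> cont_ext K Y j S f (j s) = f s"
    unfolding cont_ext_def by blast+
qed

lemma topspace_compactification_by:
  "topspace (compactification_by X F) =
     product_topology (\<lambda>_. euclideanreal) F closure_of (embed_by F ` topspace X)"
  by (metis compactification_by_def closure_of_subset_topspace topspace_subtopology_subset)

lemma embed_by_apply: "f \<in> F \<Longrightarrow> embed_by F x f = f x"
  by (simp add: embed_by_def)

lemma compactification_by_closure_of_embed:
  "compactification_by X F closure_of (embed_by F ` topspace X) = topspace (compactification_by X F)"
proof -
  let ?P = "product_topology (\<lambda>_. euclideanreal) F"
  let ?E = "embed_by F ` topspace X"
  let ?C = "?P closure_of ?E"
  have "?E \<subseteq> ?C"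
    by (rule closure_of_subset) (auto simp: embed_by_def)
  have "compactification_by X F closure_of ?E = ?C \<inter> ?P closure_of (?C \<inter> ?E)"
    by (simp add: compactification_by_def closure_of_subtopology)
  also have "\<dots> = ?C"
    by (simp add: Int_absorb1[OF \<open>?E \<subseteq> ?C\<close>])
  finally show ?thesis
    by (simp add: topspace_compactification_by)
qed

lemma continuous_map_compactification_by_eval:
  "f \<in> F \<Longrightarrow> continuous_map (compactification_by X F) euclideanreal (\<lambda>\<phi>. \<phi> f)"
  unfolding compactification_by_def
  by (rule continuous_map_from_subtopology, rule continuous_map_product_projection)

lemma compactification_by_eqI:
  assumes "\<phi> \<in> topspace (compactification_by X F)" "\<psi> \<in> topspace (compactification_by X F)"
    and "\<And>f. f \<in> F \<Longrightarrow> \<phi> f = \<psi> f"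
  shows "\<phi> = \<psi>"
proof -
  have sub: "topspace (compactification_by X F) \<subseteq> PiE F (\<lambda>_. UNIV)"
    using closure_of_subset_topspace[of "product_topology (\<lambda>_. euclideanreal) F"]
    by (simp add: topspace_compactification_by)
  show ?thesis
    by (rule PiE_ext[OF subsetD[OF sub assms(1)] subsetD[OF sub assms(2)] assms(3)])
qed

lemma compact_space_compactification_by:
  assumes bounded: "\<And>f. f \<in> F \<Longrightarrow> bounded (f ` topspace X)"
  shows "compact_space (compactification_by X F)"
proof -
  let ?P = "product_topology (\<lambda>_. euclideanreal) F"
  have "\<exists>b. \<forall>x\<in>topspace X. \<bar>f x\<bar> \<le> b" if "f \<in> F" for f
    using bounded[OF that] by (auto simp: bounded_iff)
  then obtain b where b: "\<And>f x. f \<in> F \<Longrightarrow> x \<in> topspace X \<Longrightarrow> \<bar>f x\<bar> \<le> b f"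
    by metis
  let ?Q = "PiE F (\<lambda>f. {-b f..b f})"
  have "embed_by F x \<in> ?Q" if "x \<in> topspace X" for x
    using b[OF _ that] by (auto simp: embed_by_def PiE_iff abs_le_iff minus_le_iff)
  then have "embed_by F ` topspace X \<subseteq> ?Q" by blast
  moreover have "closedin ?P ?Q"
    by (simp add: closedin_product_topology)
  ultimately have "?P closure_of (embed_by F ` topspace X) \<subseteq> ?Q"
    by (rule closure_of_minimal)
  moreover have "compactin ?P ?Q" by (simp add: compactin_PiE)
  ultimately have "compactin ?P (?P closure_of (embed_by F ` topspace X))"
    by (meson closed_compactin closedin_closure_of)
  then show ?thesis
    by (simp add: compactification_by_def compact_space_subtopology)
qed

lemma compactification_by_induced_map:
  fixes X :: "'a topology" and Y :: "'b topology" and h :: "'a \<Rightarrow> 'b"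
  assumes h: "h ` topspace X \<subseteq> topspace Y" and G: "\<And>f. f \<in> G \<Longrightarrow> (\<lambda>x. f (h x)) \<in> F"
  shows "\<exists>q. continuous_map (compactification_by X F) (compactification_by Y G) q \<and>
           (\<forall>x\<in>topspace X. q (embed_by F x) = embed_by G (h x))"
proof -
  let ?P = "product_topology (\<lambda>_. euclideanreal) F"
  let ?Q = "product_topology (\<lambda>_. euclideanreal) G"
  define q where "q \<phi> = restrict (\<lambda>f. \<phi> (\<lambda>x. f (h x))) G" for \<phi> :: "('a \<Rightarrow> real) \<Rightarrow> real"
  have q_cont: "continuous_map ?P ?Q q"
    unfolding continuous_map_componentwise
  proof
    show "q ` topspace ?P \<subseteq> extensional G" by (auto simp: q_def)
    show "\<forall>f\<in>G. continuous_map ?P euclideanreal (\<lambda>\<phi>. q \<phi> f)"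
    proof
      fix f assume "f \<in> G"
      have "continuous_map ?P euclideanreal (\<lambda>\<phi>. \<phi> (\<lambda>x. f (h x)))"
        by (rule continuous_map_product_projection) (rule G[OF \<open>f \<in> G\<close>])
      then show "continuous_map ?P euclideanreal (\<lambda>\<phi>. q \<phi> f)"
        by (rule continuous_map_eq) (simp add: q_def \<open>f \<in> G\<close>)
    qed
  qed
  have q_embed: "q (embed_by F x) = embed_by G (h x)" for x
    using G by (auto simp: q_def embed_by_def restrict_def)
  have "q ` topspace (compactification_by X F) \<subseteq> ?Q closure_of (q ` embed_by F ` topspace X)"
    unfolding topspace_compactification_by by (rule continuous_map_image_closure_subset[OF q_cont])
  also have "\<dots> \<subseteq> ?Q closure_of (embed_by G ` topspace Y)"
    by (rule closure_of_mono) (use q_embed h in auto)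
  finally have "q ` topspace (compactification_by X F) \<subseteq> ?Q closure_of (embed_by G ` topspace Y)" .
  moreover have "continuous_map (compactification_by X F) ?Q q"
    unfolding compactification_by_def[of X F] by (rule continuous_map_from_subtopology[OF q_cont])
  ultimately have "continuous_map (compactification_by X F) (compactification_by Y G) q"
    unfolding compactification_by_def[of Y G] continuous_map_in_subtopology by blast
  then show ?thesis using q_embed by blast
qed

lemma compactification_by_separate_compact:
  assumes K: "compactin (compactification_by X F) K"
    and \<eta>: "\<eta> \<in> topspace (compactification_by X F)" "\<eta> \<notin> K"
  shows "\<exists>S \<delta>. finite S \<and> S \<subseteq> F \<and> 0 < \<delta> \<and> (\<forall>\<psi>\<in>K. \<exists>f\<in>S. \<delta> < \<bar>\<psi> f - \<eta> f\<bar>)"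
proof -
  let ?C = "compactification_by X F"
  define W where "W i = {\<psi> \<in> topspace ?C. \<bar>\<psi> (fst i) - \<eta> (fst i)\<bar> \<in> {snd i<..}}" for i
  let ?I = "F \<times> {0<..}"
  have W_open: "openin ?C (W i)" if "i \<in> ?I" for i
  proof -
    have "continuous_map ?C euclideanreal (\<lambda>\<psi>. \<psi> (fst i))"
      by (rule continuous_map_compactification_by_eval) (use that in auto)
    then have "continuous_map ?C euclideanreal (\<lambda>\<psi>. \<bar>\<psi> (fst i) - \<eta> (fst i)\<bar>)"
      by (intro continuous_intros)
    then show ?thesis
      unfolding W_def by (rule openin_continuous_map_preimage) auto
  qed
  have cover: "K \<subseteq> \<Union>(W ` ?I)"
  proof
    fix \<psi> assume "\<psi> \<in> K"
    then have \<psi>: "\<psi> \<in> topspace ?C" "\<psi> \<noteq> \<eta>"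
      using compactin_subset_topspace[OF K] \<eta>(2) by auto
    then obtain f where "f \<in> F" "\<psi> f \<noteq> \<eta> f"
      using compactification_by_eqI[OF \<psi>(1) \<eta>(1)] by blast
    then have "(f, \<bar>\<psi> f - \<eta> f\<bar> / 2) \<in> ?I" "\<psi> \<in> W (f, \<bar>\<psi> f - \<eta> f\<bar> / 2)"
      using \<psi>(1) by (auto simp: W_def)
    then show "\<psi> \<in> \<Union>(W ` ?I)" by (rule UN_I)
  qed
  have "\<exists>U. finite U \<and> U \<subseteq> W ` ?I \<and> K \<subseteq> \<Union>U"
    using conjunct2[OF K[unfolded compactin_def], rule_format, of "W ` ?I"] W_open cover by blast
  then obtain U where U: "finite U" "U \<subseteq> W ` ?I" "K \<subseteq> \<Union>U" by blast
  obtain J where J: "J \<subseteq> ?I" "finite J" "U = W ` J"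
    using finite_subset_image[OF U(1,2)] by blast
  define \<delta> where "\<delta> = (if J = {} then 1 else Min (snd ` J))"
  have "0 < \<delta>"
    using J(1,2) by (auto simp: \<delta>_def Min_gr_iff)
  moreover have "\<exists>f\<in>fst ` J. \<delta> < \<bar>\<psi> f - \<eta> f\<bar>" if "\<psi> \<in> K" for \<psi>
  proof -
    obtain i where "i \<in> J" "\<psi> \<in> W i" using U(3) J(3) \<open>\<psi> \<in> K\<close> by blast
    moreover have "\<delta> \<le> snd i"
      using \<open>i \<in> J\<close> J(2) by (auto simp: \<delta>_def intro: Min_le)
    ultimately show ?thesis by (force simp: W_def)
  qed
  ultimately show ?thesis
    using J(1,2) by (intro exI[of _ "fst ` J"] exI[of _ \<delta>]) auto
qed

section \<open>Uniformly continuous functions and Lipschitz envelopes\<close>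

lemma uniformly_continuous_map_real_add:
  fixes f g :: "'a \<Rightarrow> real"
  assumes "uniformly_continuous_map m euclidean_metric f" "uniformly_continuous_map m euclidean_metric g"
  shows "uniformly_continuous_map m euclidean_metric (\<lambda>x. f x + g x)"
  unfolding uniformly_continuous_map_def
proof (intro conjI allI impI)
  fix \<epsilon> :: real assume "0 < \<epsilon>"
  then have "0 < \<epsilon> / 2" by simp
  moreover have "\<forall>\<epsilon>>0. \<exists>\<delta>>0. \<forall>x\<in>mspace m. \<forall>y\<in>mspace m. mdist m y x < \<delta> \<longrightarrow> \<bar>f y - f x\<bar> < \<epsilon>"
    "\<forall>\<epsilon>>0. \<exists>\<delta>>0. \<forall>x\<in>mspace m. \<forall>y\<in>mspace m. mdist m y x < \<delta> \<longrightarrow> \<bar>g y - g x\<bar> < \<epsilon>"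
    using assms unfolding uniformly_continuous_map_def by (simp_all add: dist_real_def)
  ultimately obtain \<delta>1 \<delta>2 where "0 < \<delta>1" "0 < \<delta>2"
    and \<delta>1: "\<forall>x\<in>mspace m. \<forall>y\<in>mspace m. mdist m y x < \<delta>1 \<longrightarrow> \<bar>f y - f x\<bar> < \<epsilon> / 2"
    and \<delta>2: "\<forall>x\<in>mspace m. \<forall>y\<in>mspace m. mdist m y x < \<delta>2 \<longrightarrow> \<bar>g y - g x\<bar> < \<epsilon> / 2"
    by blast
  show "\<exists>\<delta>>0. \<forall>x\<in>mspace m. \<forall>y\<in>mspace m. mdist m y x < \<delta> \<longrightarrow>
          mdist euclidean_metric (f y + g y) (f x + g x) < \<epsilon>"
  proof (intro exI[of _ "min \<delta>1 \<delta>2"] conjI ballI impI)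
    fix x y assume "x \<in> mspace m" "y \<in> mspace m" "mdist m y x < min \<delta>1 \<delta>2"
    then have "\<bar>f y - f x\<bar> < \<epsilon> / 2" "\<bar>g y - g x\<bar> < \<epsilon> / 2" using \<delta>1 \<delta>2 by auto
    then have "\<bar>f y + g y - (f x + g x)\<bar> < \<epsilon>" by linarith
    then show "mdist euclidean_metric (f y + g y) (f x + g x) < \<epsilon>"
      by (simp add: dist_real_def)
  qed (use \<open>0 < \<delta>1\<close> \<open>0 < \<delta>2\<close> in auto)
qed simp

lemma uniformly_continuous_map_real_sum:
  fixes f :: "'i \<Rightarrow> 'a \<Rightarrow> real"
  assumes "finite I" "\<And>i. i \<in> I \<Longrightarrow> uniformly_continuous_map m euclidean_metric (f i)"
  shows "uniformly_continuous_map m euclidean_metric (\<lambda>x. \<Sum>i\<in>I. f i x)"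
  using assms by (induction I rule: finite_induct) (auto intro: uniformly_continuous_map_real_add)

lemma uniformly_continuous_map_real_Lipschitz_compose:
  fixes f :: "'a \<Rightarrow> real" and h :: "real \<Rightarrow> real"
  assumes "uniformly_continuous_map m euclidean_metric f" "\<And>s t. \<bar>h s - h t\<bar> \<le> L * \<bar>s - t\<bar>"
  shows "uniformly_continuous_map m euclidean_metric (\<lambda>x. h (f x))"
proof -
  have "Lipschitz_continuous_map euclidean_metric euclidean_metric h"
    unfolding Lipschitz_continuous_map_def
    using assms(2) by (intro conjI exI[of _ L]) (auto simp: dist_real_def)
  then have "uniformly_continuous_map m euclidean_metric (h \<circ> f)"
    by (intro uniformly_continuous_map_compose[OF assms(1)] Lipschitz_imp_uniformly_continuous_map)
  then show ?thesis unfolding o_def .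
qed

definition lipschitz_envelope :: "'a set \<Rightarrow> ('a \<Rightarrow> 'a \<Rightarrow> real) \<Rightarrow> ('a \<Rightarrow> real) \<Rightarrow> 'a \<Rightarrow> real" where
  "lipschitz_envelope M d a x = (INF u\<in>M. a u + d x u)"

context Metric_space
begin

lemma Lipschitz_in_buc:
  assumes "\<And>x y. x \<in> M \<Longrightarrow> y \<in> M \<Longrightarrow> \<bar>f x - f y\<bar> \<le> L * d x y" "\<And>x. x \<in> M \<Longrightarrow> \<bar>f x\<bar> \<le> B"
  shows "f \<in> buc M d"
proof -
  have "Lipschitz_continuous_map (metric (M,d)) euclidean_metric f"
    unfolding Lipschitz_continuous_map_def
    using assms(1) by (intro conjI exI[of _ L]) (auto simp: dist_real_def)
  moreover have "bounded (f ` M)"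
    using assms(2) unfolding bounded_iff by auto
  ultimately show ?thesis
    by (simp add: buc_def Lipschitz_imp_uniformly_continuous_map)
qed

lemma buc_continuous_map: "f \<in> buc M d \<Longrightarrow> continuous_map mtopology euclideanreal f"
  using uniformly_continuous_imp_continuous_map[of "metric (M,d)" euclidean_metric f]
  by (simp add: buc_def)

lemma buc_uniformly_continuous:
  assumes "f \<in> buc M d" "0 < \<epsilon>"
  obtains \<delta> where "0 < \<delta>" "\<And>x y. x \<in> M \<Longrightarrow> y \<in> M \<Longrightarrow> d y x < \<delta> \<Longrightarrow> \<bar>f y - f x\<bar> < \<epsilon>"
proof -
  have "\<forall>\<epsilon>>0. \<exists>\<delta>>0. \<forall>x\<in>M. \<forall>y\<in>M. d y x < \<delta> \<longrightarrow> \<bar>f y - f x\<bar> < \<epsilon>"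
    using assms(1) by (simp add: buc_def uniformly_continuous_map_def dist_real_def)
  with assms(2) that show ?thesis by blast
qed

lemma buc_bounded:
  assumes "f \<in> buc M d"
  obtains B where "\<And>x. x \<in> M \<Longrightarrow> \<bar>f x\<bar> \<le> B"
proof -
  have "\<exists>B. \<forall>x\<in>M. \<bar>f x\<bar> \<le> B"
    using assms by (simp add: buc_def bounded_iff)
  with that show ?thesis by blast
qed

context
  fixes a :: "'a \<Rightarrow> real"
  assumes a_nonneg: "\<And>u. u \<in> M \<Longrightarrow> 0 \<le> a u"
begin

lemma lipschitz_envelope_bdd_below: "bdd_below ((\<lambda>u. a u + d x u) ` M)"
  using a_nonneg nonneg by (intro bdd_belowI[of _ 0]) (auto intro: add_nonneg_nonneg)

lemma lipschitz_envelope_nonneg: "x \<in> M \<Longrightarrow> 0 \<le> lipschitz_envelope M d a x"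
  unfolding lipschitz_envelope_def using a_nonneg nonneg
  by (intro cINF_greatest) (auto intro: add_nonneg_nonneg)

lemma lipschitz_envelope_le: "x \<in> M \<Longrightarrow> lipschitz_envelope M d a x \<le> a x"
  unfolding lipschitz_envelope_def
  using cINF_lower[OF lipschitz_envelope_bdd_below, of x x] by simp

lemma lipschitz_envelope_Lipschitz:
  assumes "x \<in> M" "y \<in> M"
  shows "lipschitz_envelope M d a x \<le> lipschitz_envelope M d a y + d x y"
proof -
  have "lipschitz_envelope M d a x - d x y \<le> a u + d y u" if "u \<in> M" for u
  proof -
    have "lipschitz_envelope M d a x \<le> a u + d x u"
      unfolding lipschitz_envelope_def by (rule cINF_lower[OF lipschitz_envelope_bdd_below that])
    moreover have "d x u \<le> d x y + d y u" using triangle assms that by blast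
    ultimately show ?thesis by linarith
  qed
  then have "lipschitz_envelope M d a x - d x y \<le> lipschitz_envelope M d a y"
    unfolding lipschitz_envelope_def[of M d a y] using assms(2) by (intro cINF_greatest) auto
  then show ?thesis by linarith
qed

lemma lipschitz_envelope_lower_bound:
  assumes x: "x \<in> M" and osc: "\<And>u. u \<in> M \<Longrightarrow> d u x < \<delta> \<Longrightarrow> \<bar>a u - a x\<bar> < \<epsilon>"
  shows "min (a x - \<epsilon>) \<delta> \<le> lipschitz_envelope M d a x"
  unfolding lipschitz_envelope_def
proof (rule cINF_greatest)
  show "M \<noteq> {}" using x by blast
  fix u assume u: "u \<in> M"
  show "min (a x - \<epsilon>) \<delta> \<le> a u + d x u"
  proof (cases "d u x < \<delta>")
    case True
    then have "a x - \<epsilon> < a u" using osc[OF u] by linarith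
    then have "a x - \<epsilon> \<le> a u + d x u" using nonneg[of x u] by linarith
    then show ?thesis by (simp add: min_le_iff_disj)
  next
    case False
    then show ?thesis using a_nonneg[OF u] commute[of u x] by (simp add: min_le_iff_disj)
  qed
qed

context
  assumes a_buc: "a \<in> buc M d"
begin

lemma lipschitz_envelope_in_buc: "lipschitz_envelope M d a \<in> buc M d"
proof -
  obtain B where B: "\<And>x. x \<in> M \<Longrightarrow> \<bar>a x\<bar> \<le> B" using buc_bounded[OF a_buc] by blast
  show ?thesis
  proof (rule Lipschitz_in_buc[where L=1 and B=B])
    fix x y assume "x \<in> M" "y \<in> M"
    then show "\<bar>lipschitz_envelope M d a x - lipschitz_envelope M d a y\<bar> \<le> 1 * d x y"
      using lipschitz_envelope_Lipschitz commute[of x y] by (force simp: abs_le_iff)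
  next
    fix x assume "x \<in> M"
    then show "\<bar>lipschitz_envelope M d a x\<bar> \<le> B"
      using lipschitz_envelope_nonneg lipschitz_envelope_le B[of x] by force
  qed
qed

lemma lipschitz_envelope_bounded_below:
  assumes "0 < t"
  obtains c where "0 < c" "\<And>x. x \<in> M \<Longrightarrow> t \<le> a x \<Longrightarrow> c \<le> lipschitz_envelope M d a x"
proof -
  obtain \<delta> where "0 < \<delta>" and \<delta>: "\<And>x y. x \<in> M \<Longrightarrow> y \<in> M \<Longrightarrow> d y x < \<delta> \<Longrightarrow> \<bar>a y - a x\<bar> < t / 2"
    using buc_uniformly_continuous[OF a_buc, of "t / 2"] assms by auto
  show thesis
  proof (rule that[of "min (t / 2) \<delta>"])
    show "0 < min (t / 2) \<delta>" using assms \<open>0 < \<delta>\<close> by simp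
    fix x assume "x \<in> M" "t \<le> a x"
    then have "min (a x - t / 2) \<delta> \<le> lipschitz_envelope M d a x"
      using \<delta> by (intro lipschitz_envelope_lower_bound) auto
    then show "min (t / 2) \<delta> \<le> lipschitz_envelope M d a x"
      using \<open>t \<le> a x\<close> by linarith
  qed
qed

end

end

end

section \<open>The compactifications \<open>\<beta>M\<^sup>~\<close> and \<open>M\<^sup>u\<close>\<close>

definition ereal_odds :: "real \<Rightarrow> ereal" where
  "ereal_odds t = (if t < 1 then ereal (t / (1 - t)) else \<infinity>)"

lemma continuous_map_ereal_odds: "continuous_map euclideanreal euclidean ereal_odds"
proof -
  have "isCont ereal_odds x" for x
  proof (cases "x < 1")
    case True
    have ev: "eventually (\<lambda>t. t < 1) (at x)"
      using order_tendstoD(2)[OF tendsto_ident_at True] .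
    have "((\<lambda>t. ereal (t / (1 - t))) \<longlongrightarrow> ereal_odds x) (at x)"
      using True by (auto simp: ereal_odds_def intro!: tendsto_ereal tendsto_intros)
    then show ?thesis
      unfolding isCont_def
      by (rule Lim_transform_eventually) (use ev in \<open>auto elim: eventually_mono simp: ereal_odds_def\<close>)
  next
    case False
    have "(ereal_odds \<longlongrightarrow> \<infinity>) (at x)"
      unfolding tendsto_PInfty
    proof
      fix r :: real
      define c where "c = (\<bar>r\<bar> + 1) / (\<bar>r\<bar> + 2)"
      have "c < 1" unfolding c_def by (simp add: divide_less_eq)
      then have "eventually (\<lambda>t. c < t) (at x)"
        using order_tendstoD(1)[OF tendsto_ident_at, of c x] False by auto
      then show "eventually (\<lambda>t. ereal r < ereal_odds t) (at x)"
      proof (rule eventually_mono)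
        fix t assume "c < t"
        show "ereal r < ereal_odds t"
        proof (cases "t < 1")
          case True
          have "t * (\<bar>r\<bar> + 2) > \<bar>r\<bar> + 1"
            using \<open>c < t\<close> unfolding c_def by (simp add: divide_less_eq)
          then have "\<bar>r\<bar> + 1 < t / (1 - t)"
            using True by (simp add: less_divide_eq algebra_simps)
          then show ?thesis using True by (simp add: ereal_odds_def)
        qed (simp add: ereal_odds_def)
      qed
    qed
    then show ?thesis using False by (simp add: isCont_def ereal_odds_def)
  qed
  then show ?thesis
    by (simp add: continuous_at_imp_continuous_on)
qed

definition pair_radius :: "'a set \<Rightarrow> ('a \<Rightarrow> 'a \<Rightarrow> real) \<Rightarrow> 'a \<Rightarrow> (('a \<times> 'a \<Rightarrow> real) \<Rightarrow> real) \<Rightarrow> ereal" where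
  "pair_radius M d z \<phi> = max (dbar0 M d z (proj1 M d \<phi>)) (dbar0 M d z (proj2 M d \<phi>))"

definition truncated_slope :: "('a \<Rightarrow> 'a \<Rightarrow> real) \<Rightarrow> ('a \<times> 'a \<Rightarrow> real) \<Rightarrow> 'a \<times> 'a \<Rightarrow> real" where
  "truncated_slope d w p = min 1 (w p / d (fst p) (snd p))"

definition subtriangular :: "'a set \<Rightarrow> ('a \<Rightarrow> 'a \<Rightarrow> real) \<Rightarrow> ('a \<times> 'a \<Rightarrow> real) \<Rightarrow> bool" where
  "subtriangular M d w \<longleftrightarrow> (\<forall>x\<in>M. \<forall>u\<in>M. \<forall>y\<in>M. x \<noteq> u \<and> u \<noteq> y \<and> x \<noteq> y \<longrightarrow>
     w (x,y) \<le> w (x,u) + w (u,y) \<and> w (x,y) \<le> w (x,u) + d u y \<and> w (x,y) \<le> d x u + w (u,y))"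

definition radial_weight :: "('a \<Rightarrow> 'a \<Rightarrow> real) \<Rightarrow> 'a \<Rightarrow> real \<Rightarrow> 'a \<times> 'a \<Rightarrow> real" where
  "radial_weight d z r p = max (d (fst p) z - r) 0 + max (d (snd p) z - r) 0"

context Metric_space
begin

lemma topspace_offdiag_top: "topspace (offdiag_top M d) = offdiag M"
  by (auto simp: offdiag_top_def offdiag_def)

lemma offdiag_dist_pos: "p \<in> offdiag M \<Longrightarrow> 0 < d (fst p) (snd p)"
  by (auto simp: offdiag_def)

lemma continuous_map_offdiag_fst: "continuous_map (offdiag_top M d) mtopology fst"
  unfolding offdiag_top_def by (intro continuous_map_from_subtopology continuous_map_fst)

lemma continuous_map_offdiag_snd: "continuous_map (offdiag_top M d) mtopology snd"
  unfolding offdiag_top_def by (intro continuous_map_from_subtopology continuous_map_snd)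

lemma continuous_map_offdiag_dist: "continuous_map (offdiag_top M d) euclideanreal (\<lambda>p. d (fst p) (snd p))"
proof -
  have "continuous_map (offdiag_top M d) euclideanreal (\<lambda>p. mdist (metric (M,d)) (fst p) (snd p))"
    by (rule continuous_map_mdist) (simp_all add: continuous_map_offdiag_fst continuous_map_offdiag_snd)
  then show ?thesis by simp
qed

lemma betaMt_eq: "betaMt M d = compactification_by (offdiag_top M d) (bcont (offdiag_top M d))"
  by (simp add: betaMt_def stone_cech_def)

lemma samuel_eq: "samuel M d = compactification_by mtopology (buc M d)"
  by (simp add: samuel_def)

lemma compact_space_betaMt: "compact_space (betaMt M d)"
  unfolding betaMt_eq by (rule compact_space_compactification_by) (simp add: bcont_def)

lemma bcontI:
  assumes "continuous_map (offdiag_top M d) euclideanreal F" "\<And>p. p \<in> offdiag M \<Longrightarrow> \<bar>F p\<bar> \<le> B"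
  shows "F \<in> bcont (offdiag_top M d)"
  using assms unfolding bcont_def topspace_offdiag_top bounded_iff by (auto intro!: exI[of _ B])

lemma betaMt_eval_in_closed:
  assumes F: "F \<in> bcont (offdiag_top M d)" and U: "openin (betaMt M d) U" "\<phi> \<in> U"
    and C: "closed C" and FC: "\<And>p. p \<in> offdiag M \<Longrightarrow> jbeta M d p \<in> U \<Longrightarrow> F p \<in> C"
  shows "\<phi> F \<in> C"
proof (rule continuous_map_closedin_dense[where g="\<lambda>\<phi>. \<phi> F", OF _ _ U])
  show "continuous_map (betaMt M d) euclideanreal (\<lambda>\<phi>. \<phi> F)"
    unfolding betaMt_eq by (rule continuous_map_compactification_by_eval[OF F])
  show "betaMt M d closure_of (jbeta M d ` offdiag M) = topspace (betaMt M d)"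
    using compactification_by_closure_of_embed[of "offdiag_top M d"]
    by (simp add: betaMt_eq jbeta_def topspace_offdiag_top)
  show "closedin euclideanreal C" using C by simp
  fix \<psi> assume "\<psi> \<in> jbeta M d ` offdiag M" "\<psi> \<in> U"
  then show "\<psi> F \<in> C"
    using FC F by (auto simp: jbeta_def embed_by_apply)
qed

lemma buc_comp_in_bcont:
  assumes h: "continuous_map (offdiag_top M d) mtopology h" and f: "f \<in> buc M d"
  shows "(\<lambda>p. f (h p)) \<in> bcont (offdiag_top M d)"
proof -
  obtain B where B: "\<And>x. x \<in> M \<Longrightarrow> \<bar>f x\<bar> \<le> B" using buc_bounded[OF f] by blast
  have "h p \<in> M" if "p \<in> offdiag M" for p
    using continuous_map_image_subset_topspace[OF h] that by (auto simp: topspace_offdiag_top)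
  moreover have "continuous_map (offdiag_top M d) euclideanreal (\<lambda>p. f (h p))"
    using continuous_map_compose[OF h buc_continuous_map[OF f]] by (simp add: o_def)
  ultimately show ?thesis using B by (intro bcontI[where B=B]) auto
qed

lemma samuel_induced_map:
  assumes h: "continuous_map (offdiag_top M d) mtopology h"
  shows "\<exists>q. continuous_map (betaMt M d) (samuel M d) q \<and> (\<forall>p\<in>offdiag M. q (jbeta M d p) = ju M d (h p))"
  using compactification_by_induced_map[of h "offdiag_top M d" mtopology "buc M d" "bcont (offdiag_top M d)"]
    continuous_map_image_subset_topspace[OF h] buc_comp_in_bcont[OF h]
  by (simp add: betaMt_eq samuel_eq jbeta_def ju_def topspace_offdiag_top)

lemma continuous_map_proj1: "continuous_map (betaMt M d) (samuel M d) (proj1 M d)"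
  and proj1_jbeta: "p \<in> offdiag M \<Longrightarrow> proj1 M d (jbeta M d p) = ju M d (fst p)"
proof -
  obtain q where "continuous_map (betaMt M d) (samuel M d) q" "\<forall>p\<in>offdiag M. q (jbeta M d p) = ju M d (fst p)"
    using samuel_induced_map[OF continuous_map_offdiag_fst] by blast
  from cont_ext_extends[OF this(1), of "offdiag M" "jbeta M d" "\<lambda>(x,y). ju M d x"] this(2)
  show "continuous_map (betaMt M d) (samuel M d) (proj1 M d)"
    "p \<in> offdiag M \<Longrightarrow> proj1 M d (jbeta M d p) = ju M d (fst p)"
    by (auto simp: proj1_def case_prod_beta)
qed

lemma continuous_map_proj2: "continuous_map (betaMt M d) (samuel M d) (proj2 M d)"
  and proj2_jbeta: "p \<in> offdiag M \<Longrightarrow> proj2 M d (jbeta M d p) = ju M d (snd p)"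
proof -
  obtain q where "continuous_map (betaMt M d) (samuel M d) q" "\<forall>p\<in>offdiag M. q (jbeta M d p) = ju M d (snd p)"
    using samuel_induced_map[OF continuous_map_offdiag_snd] by blast
  from cont_ext_extends[OF this(1), of "offdiag M" "jbeta M d" "\<lambda>(x,y). ju M d y"] this(2)
  show "continuous_map (betaMt M d) (samuel M d) (proj2 M d)"
    "p \<in> offdiag M \<Longrightarrow> proj2 M d (jbeta M d p) = ju M d (snd p)"
    by (auto simp: proj2_def case_prod_beta)
qed

lemma bump_in_buc:
  assumes S: "finite S" "S \<subseteq> buc M d" and "0 < \<delta>"
  shows "(\<lambda>x. max 0 (1 - (\<Sum>f\<in>S. \<bar>f x - c f\<bar>) / \<delta>)) \<in> buc M d"
proof -
  have "uniformly_continuous_map (metric (M,d)) euclidean_metric (\<lambda>x. \<bar>f x - c f\<bar>)" if "f \<in> S" for f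
  proof (rule uniformly_continuous_map_real_Lipschitz_compose[where h="\<lambda>t. \<bar>t - c f\<bar>" and L=1])
    show "uniformly_continuous_map (metric (M,d)) euclidean_metric f"
      using S(2) that by (auto simp: buc_def)
    show "\<bar>\<bar>s - c f\<bar> - \<bar>t - c f\<bar>\<bar> \<le> 1 * \<bar>s - t\<bar>" for s t
      using abs_triangle_ineq3[of "s - c f" "t - c f"] by simp
  qed
  then have "uniformly_continuous_map (metric (M,d)) euclidean_metric (\<lambda>x. \<Sum>f\<in>S. \<bar>f x - c f\<bar>)"
    by (rule uniformly_continuous_map_real_sum[OF S(1)])
  moreover have "\<bar>max 0 (1 - s / \<delta>) - max 0 (1 - t / \<delta>)\<bar> \<le> 1 / \<delta> * \<bar>s - t\<bar>" for s t
  proof -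
    have "\<bar>max 0 (1 - s / \<delta>) - max 0 (1 - t / \<delta>)\<bar> \<le> \<bar>s / \<delta> - t / \<delta>\<bar>" by linarith
    then show ?thesis using \<open>0 < \<delta>\<close> by (simp add: diff_divide_distrib[symmetric] abs_divide)
  qed
  ultimately have "uniformly_continuous_map (metric (M,d)) euclidean_metric
      (\<lambda>x. max 0 (1 - (\<Sum>f\<in>S. \<bar>f x - c f\<bar>) / \<delta>))"
    by (rule uniformly_continuous_map_real_Lipschitz_compose[where h="\<lambda>t. max 0 (1 - t / \<delta>)"])
  moreover have "\<bar>max 0 (1 - (\<Sum>f\<in>S. \<bar>f x - c f\<bar>) / \<delta>)\<bar> \<le> 1" for x
    using \<open>0 < \<delta>\<close> by (simp add: sum_nonneg)
  ultimately show ?thesis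
    unfolding buc_def bounded_iff by (auto intro!: exI[of _ 1])
qed

lemma samuel_bump:
  assumes K: "compactin (samuel M d) K" and \<eta>: "\<eta> \<in> topspace (samuel M d)" "\<eta> \<notin> K"
  obtains A W where "continuous_map (samuel M d) euclideanreal A" "A \<eta> = 1" "\<And>\<psi>. 0 \<le> A \<psi>"
    "openin (samuel M d) W" "K \<subseteq> W" "\<And>\<psi>. \<psi> \<in> W \<Longrightarrow> A \<psi> = 0" "(\<lambda>x. A (ju M d x)) \<in> buc M d"
proof -
  obtain S \<delta> where S: "finite S" "S \<subseteq> buc M d" and "0 < \<delta>"
    and sep: "\<And>\<psi>. \<psi> \<in> K \<Longrightarrow> \<exists>f\<in>S. \<delta> < \<bar>\<psi> f - \<eta> f\<bar>"
    using compactification_by_separate_compact[of mtopology "buc M d" K \<eta>] K \<eta>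
    by (auto simp: samuel_eq)
  define D where "D \<psi> = (\<Sum>f\<in>S. \<bar>\<psi> f - \<eta> f\<bar>)" for \<psi> :: "('a \<Rightarrow> real) \<Rightarrow> real"
  define A where "A \<psi> = max 0 (1 - D \<psi> / \<delta>)" for \<psi>
  define W where "W = {\<psi> \<in> topspace (samuel M d). D \<psi> \<in> {\<delta><..}}"
  have "continuous_map (samuel M d) euclideanreal (\<lambda>\<psi>. \<psi> f)" if "f \<in> S" for f
    unfolding samuel_eq using S(2) that by (intro continuous_map_compactification_by_eval) auto
  then have "continuous_map (samuel M d) euclideanreal (\<lambda>\<psi>. \<bar>\<psi> f - \<eta> f\<bar>)" if "f \<in> S" for f
    using that by (intro continuous_map_real_abs continuous_map_diff) simp_all
  then have D_cont: "continuous_map (samuel M d) euclideanreal D"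
    unfolding D_def by (rule continuous_map_sum[OF S(1)])
  show thesis
  proof (rule that)
    show "continuous_map (samuel M d) euclideanreal A"
      unfolding A_def using \<open>0 < \<delta>\<close>
      by (intro continuous_map_real_max continuous_map_diff continuous_map_real_divide D_cont) simp_all
    show "A \<eta> = 1" "0 \<le> A \<psi>" for \<psi> by (simp_all add: A_def D_def)
    show "openin (samuel M d) W"
      unfolding W_def by (rule openin_continuous_map_preimage[OF D_cont]) simp
    show "K \<subseteq> W"
    proof
      fix \<psi> assume "\<psi> \<in> K"
      then obtain f where "f \<in> S" "\<delta> < \<bar>\<psi> f - \<eta> f\<bar>" using sep by blast
      moreover have "\<bar>\<psi> f - \<eta> f\<bar> \<le> D \<psi>"
        unfolding D_def by (rule member_le_sum[OF \<open>f \<in> S\<close> _ S(1)]) simp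
      moreover have "\<psi> \<in> topspace (samuel M d)"
        using compactin_subset_topspace[OF K] \<open>\<psi> \<in> K\<close> by blast
      ultimately show "\<psi> \<in> W" by (simp add: W_def)
    qed
    show "A \<psi> = 0" if "\<psi> \<in> W" for \<psi>
      using that \<open>0 < \<delta>\<close> by (simp add: W_def A_def)
    have "D (ju M d x) = (\<Sum>f\<in>S. \<bar>f x - \<eta> f\<bar>)" for x
      unfolding D_def by (rule sum.cong) (use S(2) in \<open>auto simp: ju_def embed_by_apply\<close>)
    then show "(\<lambda>x. A (ju M d x)) \<in> buc M d"
      using bump_in_buc[OF S \<open>0 < \<delta>\<close>, of \<eta>] by (simp add: A_def)
  qed
qed

lemma samuel_Lipschitz_bump:
  assumes K: "compactin (samuel M d) K" and \<eta>: "\<eta> \<in> topspace (samuel M d)" "\<eta> \<notin> K"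
  obtains b W V c where "b \<in> buc M d" "\<And>x. x \<in> M \<Longrightarrow> 0 \<le> b x"
    "\<And>x y. x \<in> M \<Longrightarrow> y \<in> M \<Longrightarrow> b x \<le> b y + d x y"
    "openin (samuel M d) W" "K \<subseteq> W" "\<And>x. x \<in> M \<Longrightarrow> ju M d x \<in> W \<Longrightarrow> b x = 0"
    "openin (samuel M d) V" "\<eta> \<in> V" "0 < c" "\<And>x. x \<in> M \<Longrightarrow> ju M d x \<in> V \<Longrightarrow> c \<le> b x"
proof -
  obtain A W where A: "continuous_map (samuel M d) euclideanreal A" "A \<eta> = 1" "\<And>\<psi>. 0 \<le> A \<psi>"
    and W: "openin (samuel M d) W" "K \<subseteq> W" "\<And>\<psi>. \<psi> \<in> W \<Longrightarrow> A \<psi> = 0"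
    and a_buc: "(\<lambda>x. A (ju M d x)) \<in> buc M d"
    by (rule samuel_bump[OF assms]) blast
  define a where "a = (\<lambda>x. A (ju M d x))"
  define b where "b = lipschitz_envelope M d a"
  define V where "V = {\<psi> \<in> topspace (samuel M d). A \<psi> \<in> {1/2<..}}"
  have a: "a \<in> buc M d" "\<And>x. 0 \<le> a x" using a_buc A(3) by (simp_all add: a_def)
  obtain c where "0 < c" and c: "\<And>x. x \<in> M \<Longrightarrow> 1/2 \<le> a x \<Longrightarrow> c \<le> b x"
    unfolding b_def by (rule lipschitz_envelope_bounded_below[of a "1/2"]) (use a in simp_all)
  show thesis
  proof (rule that[of b W V c])
    show "b \<in> buc M d" unfolding b_def by (rule lipschitz_envelope_in_buc) (use a in simp_all)
    show b_nonneg: "0 \<le> b x" if "x \<in> M" for x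
      unfolding b_def by (rule lipschitz_envelope_nonneg) (use a that in simp_all)
    show "b x \<le> b y + d x y" if "x \<in> M" "y \<in> M" for x y
      unfolding b_def by (rule lipschitz_envelope_Lipschitz) (use a that in simp_all)
    show "b x = 0" if "x \<in> M" "ju M d x \<in> W" for x
      using b_nonneg[OF that(1)] lipschitz_envelope_le[of a x] a(2) W(3) that by (simp add: a_def b_def)
    show "openin (samuel M d) V"
      unfolding V_def by (rule openin_continuous_map_preimage[OF A(1)]) simp
    show "\<eta> \<in> V" using \<eta>(1) A(2) by (simp add: V_def)
    show "c \<le> b x" if "x \<in> M" "ju M d x \<in> V" for x
      using c that by (simp add: V_def a_def)
  qed (use W \<open>0 < c\<close> in simp_all)
qed

section \<open>Truncated slopes as elements of \<open>G\<close>\<close>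

text \<open>The truncation is what makes weights usable in \<open>G\<close>: \<open>d x y * truncated_slope d w (x,y) = min (d x y) (w (x,y))\<close>,
  and this minimum is subadditive along \<open>x, u, y\<close> for a subtriangular weight.\<close>
lemma truncated_slope_triangle:
  assumes w: "subtriangular M d w" and xuy: "x \<in> M" "u \<in> M" "y \<in> M" "x \<noteq> u" "u \<noteq> y" "x \<noteq> y"
  shows "d x y * truncated_slope d w (x,y) \<le> d x u * truncated_slope d w (x,u) + d u y * truncated_slope d w (u,y)"
proof -
  have min_eq: "c * truncated_slope d w p = min c (w p)" if "c = d (fst p) (snd p)" "0 < c" for c p
    using that by (simp add: truncated_slope_def min_def field_simps)
  have "0 < d x y" "0 < d x u" "0 < d u y"
    using xuy offdiag_dist_pos by (auto simp: offdiag_def)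
  moreover have "d x y \<le> d x u + d u y" using triangle xuy by blast
  moreover have "w (x,y) \<le> w (x,u) + w (u,y)" "w (x,y) \<le> w (x,u) + d u y" "w (x,y) \<le> d x u + w (u,y)"
    using w xuy unfolding subtriangular_def by blast+
  ultimately show ?thesis by (simp add: min_eq min_def)
qed

lemma subtriangular_Lipschitz_sum:
  assumes nonneg: "\<And>x. x \<in> M \<Longrightarrow> 0 \<le> c1 x" "\<And>x. x \<in> M \<Longrightarrow> 0 \<le> c2 x"
    and Lipschitz: "\<And>x y. x \<in> M \<Longrightarrow> y \<in> M \<Longrightarrow> c1 x \<le> c1 y + d x y"
      "\<And>x y. x \<in> M \<Longrightarrow> y \<in> M \<Longrightarrow> c2 x \<le> c2 y + d x y"
  shows "subtriangular M d (\<lambda>p. c1 (fst p) + c2 (snd p))"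
  unfolding subtriangular_def fst_conv snd_conv
proof (intro ballI impI)
  fix x u y assume "x \<in> M" "u \<in> M" "y \<in> M" "x \<noteq> u \<and> u \<noteq> y \<and> x \<noteq> y"
  moreover from this have "c1 x \<le> c1 u + d x u" "c2 y \<le> c2 u + d u y"
    using Lipschitz[of x u] Lipschitz[of y u] commute[of y u] by auto
  ultimately show "c1 x + c2 y \<le> c1 x + c2 u + (c1 u + c2 y) \<and> c1 x + c2 y \<le> c1 x + c2 u + d u y \<and>
    c1 x + c2 y \<le> d x u + (c1 u + c2 y)"
    using nonneg[of x] nonneg[of u] nonneg[of y] by auto
qed

lemma coordinate_weight:
  assumes sel: "sel = fst \<or> sel = snd"
    and b: "b \<in> buc M d" "\<And>x. x \<in> M \<Longrightarrow> 0 \<le> b x" "\<And>x y. x \<in> M \<Longrightarrow> y \<in> M \<Longrightarrow> b x \<le> b y + d x y"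
  shows "continuous_map (offdiag_top M d) euclideanreal (\<lambda>p. b (sel p))"
    and "\<And>p. p \<in> offdiag M \<Longrightarrow> 0 \<le> b (sel p)"
    and "subtriangular M d (\<lambda>p. b (sel p))"
proof -
  show "continuous_map (offdiag_top M d) euclideanreal (\<lambda>p. b (sel p))"
    using sel continuous_map_compose[OF _ buc_continuous_map[OF b(1)]]
      continuous_map_offdiag_fst continuous_map_offdiag_snd by (auto simp: o_def)
  show "\<And>p. p \<in> offdiag M \<Longrightarrow> 0 \<le> b (sel p)"
    using sel b(2) by (auto simp: offdiag_def)
  show "subtriangular M d (\<lambda>p. b (sel p))"
    using sel subtriangular_Lipschitz_sum[of b "\<lambda>_. 0"] subtriangular_Lipschitz_sum[of "\<lambda>_. 0" b] b(2,3)
    by auto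
qed

lemma eval_in_Gset:
  assumes F: "F \<in> bcont (offdiag_top M d)"
    and triangle: "\<And>x u y. x \<in> M \<Longrightarrow> u \<in> M \<Longrightarrow> y \<in> M \<Longrightarrow> x \<noteq> u \<Longrightarrow> u \<noteq> y \<Longrightarrow> x \<noteq> y \<Longrightarrow>
        d x y * F (x,y) \<le> d x u * F (x,u) + d u y * F (u,y)"
  shows "(\<lambda>\<phi>. \<phi> F) \<in> Gset M d"
  using continuous_map_compactification_by_eval[OF F] triangle F
  by (simp add: Gset_def betaMt_eq jbeta_def embed_by_apply)

context
  fixes w :: "'a \<times> 'a \<Rightarrow> real"
  assumes w_cont: "continuous_map (offdiag_top M d) euclideanreal w"
    and w_nonneg: "\<And>p. p \<in> offdiag M \<Longrightarrow> 0 \<le> w p"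
begin

lemma truncated_slope_bounds: "p \<in> offdiag M \<Longrightarrow> 0 \<le> truncated_slope d w p \<and> truncated_slope d w p \<le> 1"
  using offdiag_dist_pos[of p] w_nonneg[of p] by (simp add: truncated_slope_def)

lemma truncated_slope_in_bcont: "truncated_slope d w \<in> bcont (offdiag_top M d)"
proof (rule bcontI[where B=1])
  show "continuous_map (offdiag_top M d) euclideanreal (truncated_slope d w)"
    unfolding truncated_slope_def
    by (intro continuous_intros w_cont continuous_map_offdiag_dist)
      (auto simp: topspace_offdiag_top dest: offdiag_dist_pos)
qed (use truncated_slope_bounds in auto)

lemma continuous_map_truncated_slope_eval:
  "continuous_map (betaMt M d) euclideanreal (\<lambda>\<phi>. \<phi> (truncated_slope d w))"
  unfolding betaMt_eq by (rule continuous_map_compactification_by_eval[OF truncated_slope_in_bcont])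

lemma truncated_slope_eval_in_Gset:
  "subtriangular M d w \<Longrightarrow> (\<lambda>\<phi>. \<phi> (truncated_slope d w)) \<in> Gset M d"
  by (intro eval_in_Gset truncated_slope_in_bcont truncated_slope_triangle)

lemma truncated_slope_eval_eq_0:
  assumes "openin (betaMt M d) U" "\<phi> \<in> U" "\<And>p. p \<in> offdiag M \<Longrightarrow> jbeta M d p \<in> U \<Longrightarrow> w p = 0"
  shows "\<phi> (truncated_slope d w) = 0"
  using betaMt_eval_in_closed[OF truncated_slope_in_bcont assms(1,2), of "{0}"] assms(3)
  by (simp add: truncated_slope_def)

lemma truncated_slope_eval_bounds:
  assumes "\<phi> \<in> topspace (betaMt M d)"
  shows "0 \<le> \<phi> (truncated_slope d w) \<and> \<phi> (truncated_slope d w) \<le> 1"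
  using betaMt_eval_in_closed[OF truncated_slope_in_bcont openin_topspace assms, of "{0..1}"]
    truncated_slope_bounds by auto

end

section \<open>The set \<open>\<R>\<close>\<close>

context
  fixes z assumes z: "z \<in> M"
begin

text \<open>\<open>x \<mapsto> d x z / (1 + d x z)\<close> is bounded and \<open>1\<close>-Lipschitz, so it extends to \<open>M\<^sup>u\<close>;
  composing with \<open>ereal_odds\<close> undoes the squashing.\<close>
lemma continuous_map_dbar0: "continuous_map (samuel M d) euclidean (dbar0 M d z)"
  and dbar0_ju: "x \<in> M \<Longrightarrow> dbar0 M d z (ju M d x) = ereal (d x z)"
proof -
  define h where "h x = d x z / (1 + d x z)" for x
  have h_Lipschitz: "\<bar>h x - h y\<bar> \<le> 1 * d x y" if "x \<in> M" "y \<in> M" for x y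
  proof -
    have "0 < 1 + d x z" "0 < 1 + d y z"
      using nonneg[of x z] nonneg[of y z] by linarith+
    then have "h x - h y = (d x z - d y z) / ((1 + d x z) * (1 + d y z))"
      by (simp add: h_def field_simps)
    moreover have "1 \<le> (1 + d x z) * (1 + d y z)"
      using nonneg[of x z] nonneg[of y z] by (simp add: algebra_simps add_increasing)
    ultimately have "\<bar>h x - h y\<bar> \<le> \<bar>d x z - d y z\<bar>"
      by (simp add: abs_divide divide_le_eq mult_le_cancel_left1 mult.commute)
    also have "\<dots> \<le> d x y"
      using triangle[of x y z] triangle[of y x z] commute[of x y] that z by (simp add: abs_le_iff)
    finally show ?thesis by simp
  qed
  have "\<bar>h u\<bar> \<le> 1" for u
  proof -
    have "0 < 1 + d u z" using nonneg[of u z] by linarith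
    then show ?thesis by (simp add: h_def)
  qed
  then have h_buc: "h \<in> buc M d"
    by (intro Lipschitz_in_buc[OF h_Lipschitz])
  have "continuous_map (samuel M d) euclidean (\<lambda>\<psi>. ereal_odds (\<psi> h))"
    using continuous_map_compose[OF _ continuous_map_ereal_odds, of "samuel M d" "\<lambda>\<psi>. \<psi> h"]
      continuous_map_compactification_by_eval[OF h_buc, of mtopology]
    by (simp add: samuel_eq o_def)
  moreover have "ereal_odds (ju M d u h) = ereal (d u z)" for u
  proof -
    have "0 < 1 + d u z" using nonneg[of u z] by linarith
    then show ?thesis by (simp add: ju_def embed_by_apply[OF h_buc] ereal_odds_def h_def field_simps)
  qed
  ultimately show "continuous_map (samuel M d) euclidean (dbar0 M d z)"
    "x \<in> M \<Longrightarrow> dbar0 M d z (ju M d x) = ereal (d x z)"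
    unfolding dbar0_def by (blast intro: cont_ext_extends)+
qed

lemma continuous_map_pair_radius: "continuous_map (betaMt M d) euclidean (pair_radius M d z)"
proof -
  have "continuous_map (betaMt M d) euclidean (\<lambda>\<phi>. dbar0 M d z (proj1 M d \<phi>))"
    "continuous_map (betaMt M d) euclidean (\<lambda>\<phi>. dbar0 M d z (proj2 M d \<phi>))"
    using continuous_map_compose[OF continuous_map_proj1 continuous_map_dbar0]
      continuous_map_compose[OF continuous_map_proj2 continuous_map_dbar0]
    by (simp_all add: o_def)
  then show ?thesis
    unfolding pair_radius_def by (simp add: continuous_map_atin tendsto_max)
qed

lemma pair_radius_jbeta:
  "p \<in> offdiag M \<Longrightarrow> pair_radius M d z (jbeta M d p) = ereal (max (d (fst p) z) (d (snd p) z))"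
  by (auto simp: pair_radius_def proj1_jbeta proj2_jbeta dbar0_ju offdiag_def)

lemma Rset_eq: "Rset M d z = {\<phi> \<in> topspace (betaMt M d). pair_radius M d z \<phi> < \<infinity>}"
  using continuous_map_image_subset_topspace[OF continuous_map_proj1]
    continuous_map_image_subset_topspace[OF continuous_map_proj2]
  by (auto simp: Rset_def RM_def pair_radius_def max_def)

lemma openin_Rset: "openin (betaMt M d) (Rset M d z)"
proof -
  have "openin (betaMt M d) {\<phi> \<in> topspace (betaMt M d). pair_radius M d z \<phi> \<in> {..<\<infinity>}}"
    by (rule openin_continuous_map_preimage[OF continuous_map_pair_radius]) simp
  then show ?thesis by (simp add: Rset_eq)
qed

lemma Rset_bounded_nbhd:
  assumes "\<phi> \<in> Rset M d z"
  obtains B U where "openin (betaMt M d) U" "\<phi> \<in> U"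
    "\<And>p. p \<in> offdiag M \<Longrightarrow> jbeta M d p \<in> U \<Longrightarrow> max (d (fst p) z) (d (snd p) z) < B"
proof -
  have \<phi>: "pair_radius M d z \<phi> < \<infinity>" "\<phi> \<in> topspace (betaMt M d)"
    using assms by (auto simp: Rset_eq)
  then obtain n :: nat where B: "pair_radius M d z \<phi> < ereal (real n)"
    using less_PInf_Ex_of_nat by auto
  define U where "U = {\<psi> \<in> topspace (betaMt M d). pair_radius M d z \<psi> \<in> {..<ereal (real n)}}"
  show thesis
  proof (rule that)
    show "openin (betaMt M d) U"
      unfolding U_def by (rule openin_continuous_map_preimage[OF continuous_map_pair_radius]) simp
    show "\<phi> \<in> U" using B \<phi>(2) by (simp add: U_def)
    fix p assume "p \<in> offdiag M" "jbeta M d p \<in> U"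
    then show "max (d (fst p) z) (d (snd p) z) < real n"
      using pair_radius_jbeta[of p] by (simp add: U_def del: ereal_max)
  qed
qed

lemma truncated_slope_eval_pos:
  assumes w: "continuous_map (offdiag_top M d) euclideanreal w" "\<And>p. p \<in> offdiag M \<Longrightarrow> 0 \<le> w p"
    and \<phi>: "\<phi> \<in> Rset M d z" and U: "openin (betaMt M d) U" "\<phi> \<in> U"
    and c: "0 < c" "\<And>p. p \<in> offdiag M \<Longrightarrow> jbeta M d p \<in> U \<Longrightarrow> c \<le> w p"
  shows "0 < \<phi> (truncated_slope d w)"
proof -
  obtain B V where V: "openin (betaMt M d) V" "\<phi> \<in> V"
    and B: "\<And>p. p \<in> offdiag M \<Longrightarrow> jbeta M d p \<in> V \<Longrightarrow> max (d (fst p) z) (d (snd p) z) < B"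
    using Rset_bounded_nbhd[OF \<phi>] by metis
  define R where "R = max B 1"
  have "\<phi> (truncated_slope d w) \<in> {min 1 (c / (2 * R))..}"
  proof (rule betaMt_eval_in_closed[OF truncated_slope_in_bcont[OF w] openin_Int[OF U(1) V(1)]])
    show "\<phi> \<in> U \<inter> V" using U(2) V(2) by blast
    fix p assume p: "p \<in> offdiag M" "jbeta M d p \<in> U \<inter> V"
    have "d (fst p) (snd p) \<le> d (fst p) z + d z (snd p)"
      using triangle p(1) z by (auto simp: offdiag_def)
    moreover have "max (d (fst p) z) (d (snd p) z) < B" using p by (intro B) auto
    then have "max (d (fst p) z) (d (snd p) z) < R" by (simp add: R_def less_max_iff_disj)
    ultimately have "d (fst p) (snd p) \<le> 2 * R" using commute[of z "snd p"] by linarith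
    moreover have "c \<le> w p" using c(2) p by blast
    moreover have "0 < d (fst p) (snd p)" by (rule offdiag_dist_pos[OF p(1)])
    ultimately have "c / (2 * R) \<le> w p / d (fst p) (snd p)"
      using c(1) by (intro frac_le) auto
    then show "truncated_slope d w p \<in> {min 1 (c / (2 * R))..}"
      by (auto simp: truncated_slope_def)
  qed (auto intro: closed_atLeast)
  moreover have "0 < min 1 (c / (2 * R))"
    using c(1) by (simp add: R_def)
  ultimately show ?thesis by simp
qed

lemma continuous_map_offdiag_dist_point:
  assumes "continuous_map (offdiag_top M d) mtopology h"
  shows "continuous_map (offdiag_top M d) euclideanreal (\<lambda>p. d (h p) z)"
proof -
  have "continuous_map (offdiag_top M d) euclideanreal (\<lambda>p. mdist (metric (M,d)) (h p) z)"
    by (rule continuous_map_mdist) (use assms z in simp_all)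
  then show ?thesis by simp
qed

lemma radial_weight_nonneg: "0 \<le> radial_weight d z r p"
  by (simp add: radial_weight_def)

lemma continuous_map_radial_weight: "continuous_map (offdiag_top M d) euclideanreal (radial_weight d z r)"
  unfolding radial_weight_def
  by (intro continuous_intros continuous_map_offdiag_dist_point
      continuous_map_offdiag_fst continuous_map_offdiag_snd)

lemma subtriangular_radial_weight: "subtriangular M d (radial_weight d z r)"
proof -
  have "max (d x z - r) 0 \<le> max (d y z - r) 0 + d x y" if "x \<in> M" "y \<in> M" for x y
    using triangle[of x y z] that z nonneg[of x y] by linarith
  then show ?thesis
    unfolding radial_weight_def by (intro subtriangular_Lipschitz_sum) auto
qed

lemma radial_slope_ge_quarter:
  assumes p: "p \<in> offdiag M" and r: "2 * r \<le> max (d (fst p) z) (d (snd p) z)"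
  shows "1/4 \<le> truncated_slope d (radial_weight d z r) p"
proof -
  let ?m = "max (d (fst p) z) (d (snd p) z)"
  have "d (fst p) (snd p) \<le> d (fst p) z + d z (snd p)"
    using triangle p z by (auto simp: offdiag_def)
  then have "d (fst p) (snd p) \<le> 2 * ?m" using commute[of z "snd p"] by linarith
  moreover have "?m \<le> 2 * radial_weight d z r p"
    using r by (auto simp: radial_weight_def max_def)
  ultimately have "d (fst p) (snd p) \<le> 4 * radial_weight d z r p" by linarith
  moreover have "0 < d (fst p) (snd p)" by (rule offdiag_dist_pos[OF p])
  ultimately show ?thesis
    unfolding truncated_slope_def by (simp add: le_divide_eq)
qed

lemma radial_slope_eq_0:
  "max (d (fst p) z) (d (snd p) z) \<le> r \<Longrightarrow> truncated_slope d (radial_weight d z r) p = 0"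
  by (simp add: truncated_slope_def radial_weight_def)

lemma radial_test_ge_quarter:
  assumes "\<phi> \<in> topspace (betaMt M d) - Rset M d z"
  shows "1/4 \<le> \<phi> (truncated_slope d (radial_weight d z r))"
proof -
  have "pair_radius M d z \<phi> = \<infinity>" using assms by (auto simp: Rset_eq)
  let ?U = "{\<psi> \<in> topspace (betaMt M d). pair_radius M d z \<psi> \<in> {ereal (2 * r)<..}}"
  have "openin (betaMt M d) ?U"
    by (rule openin_continuous_map_preimage[OF continuous_map_pair_radius]) simp
  moreover have "\<phi> \<in> ?U" using assms \<open>pair_radius M d z \<phi> = \<infinity>\<close> by simp
  ultimately have "\<phi> (truncated_slope d (radial_weight d z r)) \<in> {1/4..}"
  proof (rule betaMt_eval_in_closed[OF truncated_slope_in_bcont[OF continuous_map_radial_weight radial_weight_nonneg]])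
    fix p assume "p \<in> offdiag M" "jbeta M d p \<in> ?U"
    then have "ereal (2 * r) < ereal (max (d (fst p) z) (d (snd p) z))"
      by (simp only: pair_radius_jbeta[symmetric]) simp
    then have "2 * r \<le> max (d (fst p) z) (d (snd p) z)" by (simp del: ereal_max)
    then show "truncated_slope d (radial_weight d z r) p \<in> {1/4..}"
      using radial_slope_ge_quarter \<open>p \<in> offdiag M\<close> by simp
  qed simp
  then show ?thesis by simp
qed

lemma radial_test_eventually_0:
  assumes "\<phi> \<in> Rset M d z"
  shows "eventually (\<lambda>n. \<phi> (truncated_slope d (radial_weight d z (real n))) = 0) sequentially"
proof -
  obtain B U where U: "openin (betaMt M d) U" "\<phi> \<in> U"
    and B: "\<And>p. p \<in> offdiag M \<Longrightarrow> jbeta M d p \<in> U \<Longrightarrow> max (d (fst p) z) (d (snd p) z) < B"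
    using Rset_bounded_nbhd[OF assms] by metis
  have "\<phi> (truncated_slope d (radial_weight d z r)) \<in> {0}" if "B \<le> r" for r
  proof (rule betaMt_eval_in_closed[OF truncated_slope_in_bcont[OF continuous_map_radial_weight radial_weight_nonneg] U])
    fix p assume "p \<in> offdiag M" "jbeta M d p \<in> U"
    then have "max (d (fst p) z) (d (snd p) z) < B" by (rule B)
    then show "truncated_slope d (radial_weight d z r) p \<in> {0}"
      using that radial_slope_eq_0 by simp
  qed simp
  then show ?thesis
    by (intro eventually_mono[OF eventually_ge_at_top[of "nat \<lceil>B\<rceil>"]])
      (meson real_nat_ceiling_ge of_nat_le_iff order_trans singletonD)
qed

section \<open>Supports and their projections\<close>

lemma Rset_complement_null:
  assumes \<mu>: "radon_measure (betaMt M d) \<mu>" and \<nu>: "radon_measure (betaMt M d) \<nu>"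
    and "mpreceq M d \<mu> \<nu>" and "AE \<phi> in \<nu>. \<phi> \<in> Rset M d z"
  shows "emeasure \<mu> (topspace (betaMt M d) - Rset M d z) = 0"
proof (rule radon_measure_null_by_test_functions[OF \<mu> \<nu>, where c="1/4"])
  let ?g = "\<lambda>n \<phi>. \<phi> (truncated_slope d (radial_weight d z (real n)))"
  note weight = continuous_map_radial_weight radial_weight_nonneg
  show "closedin (betaMt M d) (topspace (betaMt M d) - Rset M d z)"
    by (intro closedin_diff closedin_topspace openin_Rset)
  show "continuous_map (betaMt M d) euclideanreal (?g n)" for n
    by (rule continuous_map_truncated_slope_eval[OF weight])
  show "0 \<le> ?g n \<phi> \<and> ?g n \<phi> \<le> 1" if "\<phi> \<in> topspace (betaMt M d)" for n \<phi>
    by (rule truncated_slope_eval_bounds[OF weight that])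
  show "1/4 \<le> ?g n \<phi>" if "\<phi> \<in> topspace (betaMt M d) - Rset M d z" for n \<phi>
    by (rule radial_test_ge_quarter[OF that])
  show "integral\<^sup>L \<mu> (?g n) \<le> integral\<^sup>L \<nu> (?g n)" for n
    using assms(3) truncated_slope_eval_in_Gset[OF weight subtriangular_radial_weight]
    unfolding mpreceq_def by blast
  show "AE \<phi> in \<nu>. (\<lambda>n. ?g n \<phi>) \<longlonglongrightarrow> 0"
    using assms(4)
  proof (rule AE_mp, intro AE_I2 impI)
    fix \<phi> assume "\<phi> \<in> Rset M d z"
    then show "(\<lambda>n. ?g n \<phi>) \<longlonglongrightarrow> 0"
      by (intro tendsto_eventually radial_test_eventually_0)
  qed
qed simp

lemma integral_truncated_slope_pos:
  assumes \<mu>: "radon_measure (betaMt M d) \<mu>"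
    and null: "emeasure \<mu> (topspace (betaMt M d) - Rset M d z) = 0"
    and w: "continuous_map (offdiag_top M d) euclideanreal w" "\<And>p. p \<in> offdiag M \<Longrightarrow> 0 \<le> w p"
    and U: "openin (betaMt M d) U" "\<phi>0 \<in> U" "\<phi>0 \<in> support_of (betaMt M d) \<mu>"
    and c: "0 < c" "\<And>p. p \<in> offdiag M \<Longrightarrow> jbeta M d p \<in> U \<Longrightarrow> c \<le> w p"
  shows "0 < integral\<^sup>L \<mu> (\<lambda>\<phi>. \<phi> (truncated_slope d w))"
proof (rule integral_pos_if_pos_on_set)
  let ?K = "betaMt M d"
  show "integrable \<mu> (\<lambda>\<phi>. \<phi> (truncated_slope d w))"
    using truncated_slope_eval_bounds[OF w]
    by (intro radon_measure_integrable_bounded[OF \<mu> continuous_map_truncated_slope_eval[OF w], where B=1])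
      auto
  show "AE \<phi> in \<mu>. 0 \<le> \<phi> (truncated_slope d w)"
    using truncated_slope_eval_bounds[OF w] radon_measure_space[OF \<mu>] by (intro AE_I2) auto
  show UR: "U \<inter> Rset M d z \<in> sets \<mu>"
    by (intro radon_measure_openin_sets[OF \<mu>] openin_Int U(1) openin_Rset)
  have N: "topspace ?K - Rset M d z \<in> sets \<mu>"
    by (intro radon_measure_closedin_sets[OF \<mu>] closedin_diff closedin_topspace openin_Rset)
  have "0 < emeasure \<mu> U"
    using U by (auto simp: support_of_def)
  also have "emeasure \<mu> U \<le> emeasure \<mu> (U \<inter> Rset M d z \<union> (topspace ?K - Rset M d z))"
    using UR N openin_subset[OF U(1)] by (intro emeasure_mono) auto
  also have "\<dots> \<le> emeasure \<mu> (U \<inter> Rset M d z) + emeasure \<mu> (topspace ?K - Rset M d z)"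
    by (rule emeasure_subadditive[OF UR N])
  finally show "0 < emeasure \<mu> (U \<inter> Rset M d z)" using null by simp
  fix \<phi> assume "\<phi> \<in> U \<inter> Rset M d z"
  then show "0 < \<phi> (truncated_slope d w)"
    using truncated_slope_eval_pos[OF w _ U(1) _ c] by blast
qed

end

lemma proj_support_subset:
  assumes z: "z \<in> M"
    and \<mu>: "radon_measure (betaMt M d) \<mu>" and \<nu>: "radon_measure (betaMt M d) \<nu>"
    and prec: "mpreceq M d \<mu> \<nu>" and ae: "AE \<phi> in \<nu>. \<phi> \<in> Rset M d z"
    and sel: "sel = fst \<or> sel = snd"
    and pr: "continuous_map (betaMt M d) (samuel M d) pr"
      "\<And>p. p \<in> offdiag M \<Longrightarrow> pr (jbeta M d p) = ju M d (sel p)"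
  shows "pr ` support_of (betaMt M d) \<mu> \<subseteq> pr ` support_of (betaMt M d) \<nu>"
proof
  let ?K = "betaMt M d"
  fix \<eta> assume "\<eta> \<in> pr ` support_of ?K \<mu>"
  then obtain \<phi>0 where \<phi>0: "\<phi>0 \<in> support_of ?K \<mu>" and \<eta>: "\<eta> = pr \<phi>0" by blast
  show "\<eta> \<in> pr ` support_of ?K \<nu>"
  proof (rule ccontr)
    assume \<eta>_notin: "\<eta> \<notin> pr ` support_of ?K \<nu>"
    have "compactin (samuel M d) (pr ` support_of ?K \<nu>)"
      by (rule image_compactin[OF closedin_compact_space[OF compact_space_betaMt closedin_support_of] pr(1)])
    moreover have "\<eta> \<in> topspace (samuel M d)"
      using continuous_map_image_subset_topspace[OF pr(1)] \<phi>0 \<eta> by (auto simp: support_of_def)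
    ultimately obtain b W V c where b: "b \<in> buc M d" "\<And>x. x \<in> M \<Longrightarrow> 0 \<le> b x"
      "\<And>x y. x \<in> M \<Longrightarrow> y \<in> M \<Longrightarrow> b x \<le> b y + d x y"
      and W: "openin (samuel M d) W" "pr ` support_of ?K \<nu> \<subseteq> W" "\<And>x. x \<in> M \<Longrightarrow> ju M d x \<in> W \<Longrightarrow> b x = 0"
      and V: "openin (samuel M d) V" "\<eta> \<in> V" "0 < c" "\<And>x. x \<in> M \<Longrightarrow> ju M d x \<in> V \<Longrightarrow> c \<le> b x"
      using \<eta>_notin by (rule samuel_Lipschitz_bump) blast
    define w where "w = (\<lambda>p. b (sel p))"
    have sel_in: "p \<in> offdiag M \<Longrightarrow> sel p \<in> M" for p
      using sel by (auto simp: offdiag_def)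
    have w_cont: "continuous_map (offdiag_top M d) euclideanreal w"
      unfolding w_def by (rule coordinate_weight(1)[OF sel b])
    have w_nonneg: "p \<in> offdiag M \<Longrightarrow> 0 \<le> w p" for p
      unfolding w_def by (rule coordinate_weight(2)[OF sel b])
    have "subtriangular M d w"
      unfolding w_def by (rule coordinate_weight(3)[OF sel b])
    then have "integral\<^sup>L \<mu> (\<lambda>\<phi>. \<phi> (truncated_slope d w)) \<le> integral\<^sup>L \<nu> (\<lambda>\<phi>. \<phi> (truncated_slope d w))"
      using prec truncated_slope_eval_in_Gset[OF w_cont w_nonneg] unfolding mpreceq_def by blast
    moreover have "integral\<^sup>L \<nu> (\<lambda>\<phi>. \<phi> (truncated_slope d w)) = 0"
    proof (rule radon_measure_integral_eq_0[OF \<nu> truncated_slope_eval_eq_0[OF w_cont w_nonneg]])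
      show "openin ?K {\<psi> \<in> topspace ?K. pr \<psi> \<in> W}"
        by (rule openin_continuous_map_preimage[OF pr(1) W(1)])
      show "\<phi> \<in> {\<psi> \<in> topspace ?K. pr \<psi> \<in> W}" if "\<phi> \<in> support_of ?K \<nu>" for \<phi>
        using that W(2) by (auto simp: support_of_def)
      show "w p = 0" if "p \<in> offdiag M" "jbeta M d p \<in> {\<psi> \<in> topspace ?K. pr \<psi> \<in> W}" for p
        using that W(3) pr(2) sel_in by (simp add: w_def)
    qed
    moreover have "0 < integral\<^sup>L \<mu> (\<lambda>\<phi>. \<phi> (truncated_slope d w))"
    proof (rule integral_truncated_slope_pos[OF z \<mu> Rset_complement_null[OF z \<mu> \<nu> prec ae] w_cont w_nonneg _ _ \<phi>0 V(3)])
      show "openin ?K {\<psi> \<in> topspace ?K. pr \<psi> \<in> V}"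
        by (rule openin_continuous_map_preimage[OF pr(1) V(1)])
      show "\<phi>0 \<in> {\<psi> \<in> topspace ?K. pr \<psi> \<in> V}"
        using \<phi>0 \<eta> V(2) by (auto simp: support_of_def)
      show "c \<le> w p" if "p \<in> offdiag M" "jbeta M d p \<in> {\<psi> \<in> topspace ?K. pr \<psi> \<in> V}" for p
        using that V(4) pr(2) sel_in by (simp add: w_def)
    qed
    ultimately show False by simp
  qed
qed

end

theorem corollary3p30:
  fixes M :: "'a set" and d :: "'a \<Rightarrow> 'a \<Rightarrow> real" and z :: 'a
    and \<mu> \<nu> :: "((('a \<times> 'a) \<Rightarrow> real) \<Rightarrow> real) measure"
  assumes "Metric_space M d" and "Metric_space.mcomplete M d" and "z \<in> M"
    and "\<exists>a\<in>M. \<exists>b\<in>M. \<exists>c\<in>M. a \<noteq> b \<and> b \<noteq> c \<and> a \<noteq> c"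
    and "radon_measure (betaMt M d) \<mu>" and "radon_measure (betaMt M d) \<nu>"
    and "mpreceq M d \<mu> \<nu>"
    and "AE \<phi> in \<nu>. \<phi> \<in> Rset M d z"
  shows "proj1 M d ` support_of (betaMt M d) \<mu> \<subseteq> proj1 M d ` support_of (betaMt M d) \<nu>
       \<and> proj2 M d ` support_of (betaMt M d) \<mu> \<subseteq> proj2 M d ` support_of (betaMt M d) \<nu>"
proof -
  interpret Metric_space M d by (rule assms(1))
  show ?thesis
    using proj_support_subset[OF assms(3,5-8) _ continuous_map_proj1 proj1_jbeta]
      proj_support_subset[OF assms(3,5-8) _ continuous_map_proj2 proj2_jbeta]
    by blast
qed

end
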